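(* Let $\Delta$ be a finite domain, $\mathcal{L}$ a first-order language, $R$ a binary and $A$ a unary predicate of $\mathcal{L}$, $k$ an integer with $0\le k\le|\Delta|$, $\Gamma$ a first-order sentence over $\mathcal{L}$, and $\Upsilon$ a conjunction (over $\mathcal{L}$) of constraints of the forms $\forall x\,\exists_{=c}y:\psi(x,y)$, $\exists_{=c}x\,\forall y:\psi(x,y)$ and cardinality constraints. Let $U^R$ (unary) and $B^R$ (binary) be new predicates not in $\mathcal{L}$, with all their weights equal to $1$, and let $\Omega_{\mathrm{ext}}$ be the set of possible worlds on $\Delta$ w.r.t. $\mathcal{L}$ extended by $U^R,B^R$. Define $\Phi=\Phi_1\wedge\Phi_2\wedge\Phi_3\wedge\Phi_4$ with $\Phi_1=\forall x\,\exists_{=k}y:B^R(x,y)$, $\Phi_2=(|U^R|=k)$, $\Phi_3=\forall x\forall y:(A(x)\wedge B^R(x,y))\Rightarrow U^R(y)$, $\Phi_4=\forall x\forall y:\neg A(x)\Rightarrow(R(x,y)\Leftrightarrow B^R(x,y))$. Then for all weight functions $w,\overline{w}$, $$\mathrm{WFOMC}\big(\Gamma\wedge\Upsilon\wedge(\forall x:A(x)\vee(\exists_{=k}y:R(x,y))),w,\overline{w},\Delta\big)=\binom{|\Delta|}{k}^{-1}\mathrm{WFOMC}(\Gamma\wedge\Upsilon\wedge\Phi,w,\overline{w},\Omega_{\mathrm{ext}}),$$ where the left-hand side is taken over all possible worlds on $\Delta$ w.r.t. $\mathcal{L}$.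
   Context: A possible world on $\Delta$ is a set of ground atoms over the language's predicates and $\Delta$. $N(R,\omega)$ is the number of ground atoms of $R$ true in $\omega$. For a set $\Omega$ of possible worlds, $\mathrm{WFOMC}(\Gamma,w,\overline{w},\Omega)=\sum_{\omega\in\Omega,\,\omega\models\Gamma}\prod_{R} w(R)^{N(R,\omega)}\overline{w}(R)^{|\Delta|^{\mathrm{arity}(R)}-N(R,\omega)}$, the product ranging over the predicates of the language of $\Omega$; $\mathrm{WFOMC}(\cdot,\cdot,\cdot,\Delta)$ uses all possible worlds on $\Delta$. A cardinality constraint $|S|=c$ holds iff $N(S,\omega)=c$. $\exists_{=k}y\,\psi(y)$ holds iff exactly $k$ distinct elements of $\Delta$ satisfy $\psi$. *)

theory Defs
  imports Complex_Main
begin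

datatype 'p fm =
    Tru
  | Atom 'p "nat list"
  | Eq nat nat
  | Neg "'p fm"
  | Conj "'p fm" "'p fm"
  | Disj "'p fm" "'p fm"
  | Imp "'p fm" "'p fm"
  | Iff "'p fm" "'p fm"
  | All nat "'p fm"
  | Ex nat "'p fm"
  | ExEq nat nat "'p fm"
  | Card 'p nat

type_synonym ('p, 'd) world = "('p \<times> 'd list) set"

definition N :: "'p \<Rightarrow> ('p, 'd) world \<Rightarrow> nat" where
  "N P \<omega> = card {xs. (P, xs) \<in> \<omega>}"

fun sat :: "'d set \<Rightarrow> ('p, 'd) world \<Rightarrow> (nat \<Rightarrow> 'd) \<Rightarrow> 'p fm \<Rightarrow> bool" where
  "sat D \<omega> \<sigma> Tru = True"
| "sat D \<omega> \<sigma> (Atom P xs) = ((P, map \<sigma> xs) \<in> \<omega>)"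
| "sat D \<omega> \<sigma> (Eq x y) = (\<sigma> x = \<sigma> y)"
| "sat D \<omega> \<sigma> (Neg \<phi>) = (\<not> sat D \<omega> \<sigma> \<phi>)"
| "sat D \<omega> \<sigma> (Conj \<phi> \<psi>) = (sat D \<omega> \<sigma> \<phi> \<and> sat D \<omega> \<sigma> \<psi>)"
| "sat D \<omega> \<sigma> (Disj \<phi> \<psi>) = (sat D \<omega> \<sigma> \<phi> \<or> sat D \<omega> \<sigma> \<psi>)"
| "sat D \<omega> \<sigma> (Imp \<phi> \<psi>) = (sat D \<omega> \<sigma> \<phi> \<longrightarrow> sat D \<omega> \<sigma> \<psi>)"
| "sat D \<omega> \<sigma> (Iff \<phi> \<psi>) = (sat D \<omega> \<sigma> \<phi> \<longleftrightarrow> sat D \<omega> \<sigma> \<psi>)"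
| "sat D \<omega> \<sigma> (All x \<phi>) = (\<forall>d\<in>D. sat D \<omega> (\<sigma>(x := d)) \<phi>)"
| "sat D \<omega> \<sigma> (Ex x \<phi>) = (\<exists>d\<in>D. sat D \<omega> (\<sigma>(x := d)) \<phi>)"
| "sat D \<omega> \<sigma> (ExEq c x \<phi>) = (card {d\<in>D. sat D \<omega> (\<sigma>(x := d)) \<phi>} = c)"
| "sat D \<omega> \<sigma> (Card P c) = (N P \<omega> = c)"

text \<open>A sentence is true in a world (free of free variables, so the assignment is irrelevant).\<close>
definition models :: "'d set \<Rightarrow> ('p, 'd) world \<Rightarrow> 'p fm \<Rightarrow> bool" where
  "models D \<omega> \<phi> = (\<forall>\<sigma>. sat D \<omega> \<sigma> \<phi>)"

fun fv :: "'p fm \<Rightarrow> nat set" where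
  "fv Tru = {}"
| "fv (Atom P xs) = set xs"
| "fv (Eq x y) = {x, y}"
| "fv (Neg \<phi>) = fv \<phi>"
| "fv (Conj \<phi> \<psi>) = fv \<phi> \<union> fv \<psi>"
| "fv (Disj \<phi> \<psi>) = fv \<phi> \<union> fv \<psi>"
| "fv (Imp \<phi> \<psi>) = fv \<phi> \<union> fv \<psi>"
| "fv (Iff \<phi> \<psi>) = fv \<phi> \<union> fv \<psi>"
| "fv (All x \<phi>) = fv \<phi> - {x}"
| "fv (Ex x \<phi>) = fv \<phi> - {x}"
| "fv (ExEq c x \<phi>) = fv \<phi> - {x}"
| "fv (Card P c) = {}"

fun over :: "('p \<Rightarrow> nat) \<Rightarrow> 'p set \<Rightarrow> 'p fm \<Rightarrow> bool" where
  "over ar L Tru = True"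
| "over ar L (Atom P xs) = (P \<in> L \<and> length xs = ar P)"
| "over ar L (Eq x y) = True"
| "over ar L (Neg \<phi>) = over ar L \<phi>"
| "over ar L (Conj \<phi> \<psi>) = (over ar L \<phi> \<and> over ar L \<psi>)"
| "over ar L (Disj \<phi> \<psi>) = (over ar L \<phi> \<and> over ar L \<psi>)"
| "over ar L (Imp \<phi> \<psi>) = (over ar L \<phi> \<and> over ar L \<psi>)"
| "over ar L (Iff \<phi> \<psi>) = (over ar L \<phi> \<and> over ar L \<psi>)"
| "over ar L (All x \<phi>) = over ar L \<phi>"
| "over ar L (Ex x \<phi>) = over ar L \<phi>"
| "over ar L (ExEq c x \<phi>) = over ar L \<phi>"
| "over ar L (Card P c) = (P \<in> L)"

fun first_order :: "'p fm \<Rightarrow> bool" where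
  "first_order Tru = True"
| "first_order (Atom P xs) = True"
| "first_order (Eq x y) = True"
| "first_order (Neg \<phi>) = first_order \<phi>"
| "first_order (Conj \<phi> \<psi>) = (first_order \<phi> \<and> first_order \<psi>)"
| "first_order (Disj \<phi> \<psi>) = (first_order \<phi> \<and> first_order \<psi>)"
| "first_order (Imp \<phi> \<psi>) = (first_order \<phi> \<and> first_order \<psi>)"
| "first_order (Iff \<phi> \<psi>) = (first_order \<phi> \<and> first_order \<psi>)"
| "first_order (All x \<phi>) = first_order \<phi>"
| "first_order (Ex x \<phi>) = first_order \<phi>"
| "first_order (ExEq c x \<phi>) = False"
| "first_order (Card P c) = False"

definition upsilon_constraint :: "('p \<Rightarrow> nat) \<Rightarrow> 'p set \<Rightarrow> 'p fm \<Rightarrow> bool" where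
  "upsilon_constraint ar L \<phi> \<longleftrightarrow>
     (\<exists>x y c \<psi>. x \<noteq> y \<and> first_order \<psi> \<and> over ar L \<psi> \<and> fv \<psi> \<subseteq> {x, y} \<and>
        (\<phi> = All x (ExEq c y \<psi>) \<or> \<phi> = ExEq c x (All y \<psi>)))
   \<or> (\<exists>P c. P \<in> L \<and> \<phi> = Card P c)"

fun conj_list :: "'p fm list \<Rightarrow> 'p fm" where
  "conj_list [] = Tru"
| "conj_list (\<phi> # \<phi>s) = Conj \<phi> (conj_list \<phi>s)"

definition ground_atoms :: "('p \<Rightarrow> nat) \<Rightarrow> 'p set \<Rightarrow> 'd set \<Rightarrow> ('p \<times> 'd list) set" where
  "ground_atoms ar L D = {(P, xs). P \<in> L \<and> length xs = ar P \<and> set xs \<subseteq> D}"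

definition possible_worlds :: "('p \<Rightarrow> nat) \<Rightarrow> 'p set \<Rightarrow> 'd set \<Rightarrow> ('p, 'd) world set" where
  "possible_worlds ar L D = Pow (ground_atoms ar L D)"

definition weight :: "('p \<Rightarrow> nat) \<Rightarrow> 'p set \<Rightarrow> 'd set \<Rightarrow> ('p \<Rightarrow> real) \<Rightarrow> ('p \<Rightarrow> real)
    \<Rightarrow> ('p, 'd) world \<Rightarrow> real" where
  "weight ar L D w wb \<omega> = (\<Prod>P\<in>L. w P ^ N P \<omega> * wb P ^ (card D ^ ar P - N P \<omega>))"

text \<open>WFOMC(Gamma, w, wbar, Omega) where Omega is the set of possible worlds on D
  w.r.t. language L; the product ranges over the predicates of L.\<close>
definition WFOMC :: "('p \<Rightarrow> nat) \<Rightarrow> 'p set \<Rightarrow> 'd set \<Rightarrow> 'p fm \<Rightarrow> ('p \<Rightarrow> real) \<Rightarrow> ('p \<Rightarrow> real) \<Rightarrow> real" where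
  "WFOMC ar L D \<Gamma> w wb =
     (\<Sum>\<omega>\<in>{\<omega>\<in>possible_worlds ar L D. models D \<omega> \<Gamma>}. weight ar L D w wb \<omega>)"

end

theory Submission imports Defs begin

text \<open>Every model of \<open>\<Gamma> \<and> \<Upsilon> \<and> \<Phi>\<close> restricts to a model of the left-hand sentence on the
  original language, since for elements outside \<open>A\<close> the relation \<open>B\<^sup>R\<close> is \<open>R\<close> and has exactly
  \<open>k\<close> successors. Conversely a model \<open>\<omega>\<close> of the left-hand sentence extends in exactly
  \<open>|\<Delta>| choose k\<close> ways: \<open>U\<^sup>R\<close> can be any \<open>k\<close>-subset \<open>V\<close> of \<open>\<Delta>\<close>, and then \<open>B\<^sup>R(a, \<cdot>)\<close> is forced
  to be \<open>V\<close> if \<open>A(a)\<close> (it has \<open>k\<close> successors, all inside \<open>V\<close>) and \<open>R(a, \<cdot>)\<close> otherwise.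
  As \<open>U\<^sup>R\<close> and \<open>B\<^sup>R\<close> have weight one, every extension carries the weight of \<open>\<omega>\<close>.\<close>

definition restrict_world :: "'p set \<Rightarrow> ('p, 'd) world \<Rightarrow> ('p, 'd) world" where
  "restrict_world L \<omega> = {a \<in> \<omega>. fst a \<in> L}"

definition successors :: "'d set \<Rightarrow> 'p \<Rightarrow> ('p, 'd) world \<Rightarrow> 'd \<Rightarrow> 'd set" where
  "successors D R \<omega> d = {e \<in> D. (R, [d, e]) \<in> \<omega>}"

lemma sat_restrict_world:
  "over ar L \<phi> \<Longrightarrow> sat D (restrict_world L \<omega>) \<sigma> \<phi> = sat D \<omega> \<sigma> \<phi>"
proof (induction \<phi> arbitrary: \<sigma>)
  case (Card P c)
  then have "{xs. (P, xs) \<in> restrict_world L \<omega>} = {xs. (P, xs) \<in> \<omega>}"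
    by (auto simp: restrict_world_def)
  then show ?case by (simp add: N_def)
qed (auto simp: restrict_world_def)

lemma models_restrict_world:
  "over ar L \<phi> \<Longrightarrow> models D (restrict_world L \<omega>) \<phi> = models D \<omega> \<phi>"
  by (simp add: models_def sat_restrict_world)

lemma models_Conj: "models D \<omega> (Conj \<phi> \<psi>) = (models D \<omega> \<phi> \<and> models D \<omega> \<psi>)"
  by (auto simp: models_def)

lemma over_conj_list:
  "\<forall>\<phi>\<in>set \<phi>s. upsilon_constraint ar L \<phi> \<Longrightarrow> over ar L (conj_list \<phi>s)"
  by (induction \<phi>s) (auto simp: upsilon_constraint_def)

lemma N_restrict_world: "P \<in> L \<Longrightarrow> N P (restrict_world L \<omega>) = N P \<omega>"
  by (simp add: N_def restrict_world_def)

lemma mem_possible_worlds: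
  "\<omega> \<in> possible_worlds ar L D \<longleftrightarrow>
     (\<forall>P xs. (P, xs) \<in> \<omega> \<longrightarrow> P \<in> L \<and> length xs = ar P \<and> set xs \<subseteq> D)"
  by (auto simp: possible_worlds_def ground_atoms_def)

lemma N_unary:
  assumes "\<omega> \<in> possible_worlds ar L D" "ar P = 1"
  shows "N P \<omega> = card {u. (P, [u]) \<in> \<omega>}"
proof -
  have "{xs. (P, xs) \<in> \<omega>} = (\<lambda>u. [u]) ` {u. (P, [u]) \<in> \<omega>}"
    using assms by (fastforce simp: mem_possible_worlds length_Suc_conv)
  then show ?thesis
    by (simp add: N_def card_image inj_on_def)
qed

lemma finite_possible_worlds:
  assumes "finite L" "finite D"
  shows "finite (possible_worlds ar L D)"
proof -
  have "ground_atoms ar L D \<subseteq> Sigma L (\<lambda>P. {xs. set xs \<subseteq> D \<and> length xs = ar P})"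
    by (auto simp: ground_atoms_def)
  moreover have "finite (Sigma L (\<lambda>P. {xs. set xs \<subseteq> D \<and> length xs = ar P}))"
    using assms by (intro finite_SigmaI finite_lists_length_eq) auto
  ultimately show ?thesis
    unfolding possible_worlds_def by (meson finite_Pow_iff finite_subset)
qed

lemma restrict_world_possible_worlds:
  "\<omega> \<in> possible_worlds ar (L \<union> M) D \<Longrightarrow> restrict_world L \<omega> \<in> possible_worlds ar L D"
  by (auto simp: mem_possible_worlds restrict_world_def)

lemma weight_unit_weight_extension:
  assumes "finite L" "finite M" "L \<inter> M = {}" "\<forall>P\<in>M. w P = 1 \<and> wb P = 1"
  shows "weight ar (L \<union> M) D w wb \<omega> = weight ar L D w wb (restrict_world L \<omega>)"
proof -
  have "weight ar (L \<union> M) D w wb \<omega>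
      = (\<Prod>P\<in>L. w P ^ N P \<omega> * wb P ^ (card D ^ ar P - N P \<omega>)) *
        (\<Prod>P\<in>M. w P ^ N P \<omega> * wb P ^ (card D ^ ar P - N P \<omega>))"
    unfolding weight_def using assms(1-3) by (rule prod.union_disjoint)
  also have "(\<Prod>P\<in>M. w P ^ N P \<omega> * wb P ^ (card D ^ ar P - N P \<omega>)) = 1"
    using assms(4) by simp
  finally show ?thesis
    by (simp add: weight_def N_restrict_world)
qed

lemma sum_comp_const_fibres:
  assumes "finite T" "finite S" "r ` T \<subseteq> S" "\<And>s. s \<in> S \<Longrightarrow> card {t \<in> T. r t = s} = c"
  shows "(\<Sum>t\<in>T. g (r t)) = of_nat c * (\<Sum>s\<in>S. g s)"
proof -
  have "(\<Sum>t\<in>T. g (r t)) = (\<Sum>s\<in>S. \<Sum>t\<in>{t \<in> T. r t = s}. g (r t))"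
    by (rule sum.group[OF assms(1-3), symmetric])
  also have "\<dots> = (\<Sum>s\<in>S. of_nat c * g s)"
    using assms(4) by (intro sum.cong) auto
  finally show ?thesis
    by (simp add: sum_distrib_left)
qed

lemma WFOMC_unit_weight_extension:
  assumes "finite D" "finite L" "finite M" "L \<inter> M = {}" "\<forall>P\<in>M. w P = 1 \<and> wb P = 1"
    and to_models: "\<And>\<omega>. \<omega> \<in> possible_worlds ar (L \<union> M) D \<Longrightarrow> models D \<omega> \<psi> \<Longrightarrow>
                      models D (restrict_world L \<omega>) \<phi>"
    and fibres: "\<And>\<omega>. \<omega> \<in> possible_worlds ar L D \<Longrightarrow> models D \<omega> \<phi> \<Longrightarrow>
                   card {\<omega>' \<in> possible_worlds ar (L \<union> M) D. models D \<omega>' \<psi> \<and>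
                                restrict_world L \<omega>' = \<omega>} = c"
  shows "WFOMC ar (L \<union> M) D \<psi> w wb = real c * WFOMC ar L D \<phi> w wb"
proof -
  let ?T = "{\<omega> \<in> possible_worlds ar (L \<union> M) D. models D \<omega> \<psi>}"
  let ?S = "{\<omega> \<in> possible_worlds ar L D. models D \<omega> \<phi>}"
  have "finite ?T" "finite ?S"
    using finite_possible_worlds[of L D ar] finite_possible_worlds[of "L \<union> M" D ar] assms(1-3)
    by auto
  moreover have "restrict_world L ` ?T \<subseteq> ?S"
    using to_models restrict_world_possible_worlds by blast
  moreover have "card {\<omega>' \<in> ?T. restrict_world L \<omega>' = \<omega>} = c" if "\<omega> \<in> ?S" for \<omega>
    using fibres[of \<omega>] that by (simp add: conj_assoc)
  ultimately show ?thesis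
    unfolding WFOMC_def weight_unit_weight_extension[OF assms(2-5)]
    by (rule sum_comp_const_fibres)
qed

locale exactly_k_encoding =
  fixes ar :: "'p \<Rightarrow> nat" and L :: "'p set" and D :: "'d set" and R A U B :: 'p and k :: nat
  assumes finite_D: "finite D"
    and R_in_L: "R \<in> L" and A_in_L: "A \<in> L"
    and U_notin_L: "U \<notin> L" and B_notin_L: "B \<notin> L" and U_neq_B: "U \<noteq> B"
    and ar_U: "ar U = 1" and ar_B: "ar B = 2"
begin

definition k_successors_off_A :: "('p, 'd) world \<Rightarrow> bool" where
  "k_successors_off_A \<omega> \<longleftrightarrow> (\<forall>d\<in>D. (A, [d]) \<in> \<omega> \<or> card (successors D R \<omega> d) = k)"

definition Phi :: "('p, 'd) world \<Rightarrow> bool" where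
  "Phi \<omega> \<longleftrightarrow> (\<forall>d\<in>D. card (successors D B \<omega> d) = k) \<and> N U \<omega> = k \<and>
     (\<forall>d\<in>D. \<forall>e\<in>D. (A, [d]) \<in> \<omega> \<and> (B, [d, e]) \<in> \<omega> \<longrightarrow> (U, [e]) \<in> \<omega>) \<and>
     (\<forall>d\<in>D. \<forall>e\<in>D. (A, [d]) \<notin> \<omega> \<longrightarrow> ((R, [d, e]) \<in> \<omega> \<longleftrightarrow> (B, [d, e]) \<in> \<omega>))"

definition extend :: "('p, 'd) world \<Rightarrow> 'd set \<Rightarrow> ('p, 'd) world" where
  "extend \<omega> V = \<omega> \<union> (\<lambda>u. (U, [u])) ` V \<union>
     {(B, [a, b]) | a b. a \<in> D \<and> b \<in> D \<and> (if (A, [a]) \<in> \<omega> then b \<in> V else (R, [a, b]) \<in> \<omega>)}"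

definition k_successors_off_A_sentence :: "nat \<Rightarrow> nat \<Rightarrow> 'p fm" where
  "k_successors_off_A_sentence x y = All x (Disj (Atom A [x]) (ExEq k y (Atom R [x, y])))"

definition Phi_sentence :: "nat \<Rightarrow> nat \<Rightarrow> 'p fm" where
  "Phi_sentence x y =
     Conj (All x (ExEq k y (Atom B [x, y])))
       (Conj (Card U k)
       (Conj (All x (All y (Imp (Conj (Atom A [x]) (Atom B [x, y])) (Atom U [y]))))
             (All x (All y (Imp (Neg (Atom A [x])) (Iff (Atom R [x, y]) (Atom B [x, y])))))))"

lemma models_k_successors_off_A_sentence:
  "x \<noteq> y \<Longrightarrow> models D \<omega> (k_successors_off_A_sentence x y) \<longleftrightarrow> k_successors_off_A \<omega>"
  by (simp add: models_def successors_def k_successors_off_A_def k_successors_off_A_sentence_def)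

lemma models_Phi_sentence: "x \<noteq> y \<Longrightarrow> models D \<omega> (Phi_sentence x y) \<longleftrightarrow> Phi \<omega>"
  by (simp add: models_def successors_def Phi_def Phi_sentence_def)

lemma k_successors_off_A_restrict_world:
  assumes "Phi \<omega>"
  shows "k_successors_off_A (restrict_world L \<omega>)"
proof -
  have A_iff: "(A, [d]) \<in> restrict_world L \<omega> \<longleftrightarrow> (A, [d]) \<in> \<omega>" for d
    using A_in_L by (simp add: restrict_world_def)
  have "\<forall>d\<in>D. (A, [d]) \<notin> \<omega> \<longrightarrow> successors D R (restrict_world L \<omega>) d = successors D B \<omega> d"
    using assms R_in_L by (auto simp: Phi_def successors_def restrict_world_def)
  then show ?thesis
    using assms by (auto simp: Phi_def k_successors_off_A_def A_iff)
qed

context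
  fixes \<omega> :: "('p, 'd) world"
  assumes \<omega>_world: "\<omega> \<in> possible_worlds ar L D"
begin

lemma restrict_world_extend: "restrict_world L (extend \<omega> V) = \<omega>"
  using \<omega>_world U_notin_L B_notin_L
  by (auto simp: restrict_world_def extend_def mem_possible_worlds)

lemma extend_possible_worlds: "V \<subseteq> D \<Longrightarrow> extend \<omega> V \<in> possible_worlds ar (L \<union> {U, B}) D"
  using \<omega>_world ar_U ar_B by (auto simp: extend_def mem_possible_worlds)

lemma mem_extend_L: "P \<in> L \<Longrightarrow> (P, xs) \<in> extend \<omega> V \<longleftrightarrow> (P, xs) \<in> \<omega>"
  using U_notin_L B_notin_L by (auto simp: extend_def)

lemma mem_extend_U: "(U, [u]) \<in> extend \<omega> V \<longleftrightarrow> u \<in> V"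
  using \<omega>_world U_notin_L U_neq_B by (auto simp: extend_def mem_possible_worlds)

lemma mem_extend_B:
  "(B, [d, e]) \<in> extend \<omega> V \<longleftrightarrow>
     d \<in> D \<and> e \<in> D \<and> (if (A, [d]) \<in> \<omega> then e \<in> V else (R, [d, e]) \<in> \<omega>)"
  using \<omega>_world B_notin_L U_neq_B by (auto simp: extend_def mem_possible_worlds)

lemma Phi_extend:
  assumes "k_successors_off_A \<omega>" "V \<subseteq> D" "card V = k"
  shows "Phi (extend \<omega> V)"
proof -
  have "extend \<omega> V \<in> possible_worlds ar (L \<union> {U, B}) D"
    using assms(2) by (rule extend_possible_worlds)
  then have "N U (extend \<omega> V) = k"
    by (simp add: N_unary ar_U mem_extend_U assms(3))
  moreover have "successors D B (extend \<omega> V) d = (if (A, [d]) \<in> \<omega> then V else successors D R \<omega> d)"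
    if "d \<in> D" for d
    using that assms(2) by (auto simp: successors_def mem_extend_B)
  ultimately show ?thesis
    using assms(1,2) by (auto simp: Phi_def k_successors_off_A_def assms(3) mem_extend_B
        mem_extend_U mem_extend_L[OF A_in_L] mem_extend_L[OF R_in_L] successors_def)
qed

end

lemma possible_worlds_eqI:
  assumes worlds: "\<omega>\<^sub>1 \<in> possible_worlds ar (L \<union> {U, B}) D" "\<omega>\<^sub>2 \<in> possible_worlds ar (L \<union> {U, B}) D"
    and same_L: "restrict_world L \<omega>\<^sub>1 = restrict_world L \<omega>\<^sub>2"
    and same_U: "\<And>u. (U, [u]) \<in> \<omega>\<^sub>1 \<longleftrightarrow> (U, [u]) \<in> \<omega>\<^sub>2"
    and same_B: "\<And>a b. (B, [a, b]) \<in> \<omega>\<^sub>1 \<longleftrightarrow> (B, [a, b]) \<in> \<omega>\<^sub>2"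
  shows "\<omega>\<^sub>1 = \<omega>\<^sub>2"
proof -
  have subset: "\<omega> \<subseteq> \<omega>'" if "\<omega> \<in> possible_worlds ar (L \<union> {U, B}) D"
    and "restrict_world L \<omega> = restrict_world L \<omega>'"
    and "\<And>u. (U, [u]) \<in> \<omega> \<Longrightarrow> (U, [u]) \<in> \<omega>'"
    and "\<And>a b. (B, [a, b]) \<in> \<omega> \<Longrightarrow> (B, [a, b]) \<in> \<omega>'"
  for \<omega> \<omega>' :: "('p, 'd) world"
  proof (rule subrelI)
    fix P xs assume atom: "(P, xs) \<in> \<omega>"
    then have "P \<in> L \<or> P = U \<or> P = B" "length xs = ar P"
      using that(1) by (auto simp: mem_possible_worlds)
    then consider "P \<in> L" | u where "P = U" "xs = [u]" | a b where "P = B" "xs = [a, b]"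
      using ar_U ar_B by (auto simp: length_Suc_conv numeral_2_eq_2)
    then show "(P, xs) \<in> \<omega>'"
      using atom that(2-4) by cases (auto simp: restrict_world_def set_eq_iff)
  qed
  have "\<omega>\<^sub>1 \<subseteq> \<omega>\<^sub>2"
    using same_U same_B by (intro subset[OF worlds(1) same_L]) auto
  moreover have "\<omega>\<^sub>2 \<subseteq> \<omega>\<^sub>1"
    using same_U same_B by (intro subset[OF worlds(2) same_L[symmetric]]) auto
  ultimately show ?thesis
    by (rule subset_antisym)
qed

lemma U_atoms_of_Phi:
  assumes "\<omega> \<in> possible_worlds ar (L \<union> {U, B}) D" "Phi \<omega>"
  shows "{u. (U, [u]) \<in> \<omega>} \<subseteq> D" "card {u. (U, [u]) \<in> \<omega>} = k"
  using assms N_unary[OF assms(1) ar_U] by (fastforce simp: mem_possible_worlds Phi_def)+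

text \<open>The extension is forced: an element in \<open>A\<close> has \<open>k\<close> \<open>B\<close>-successors, all of them in the
  \<open>k\<close>-element set \<open>U\<close>, so its successors are exactly \<open>U\<close>.\<close>

lemma extend_restrict_world:
  assumes world: "\<omega> \<in> possible_worlds ar (L \<union> {U, B}) D" and "Phi \<omega>"
  shows "extend (restrict_world L \<omega>) {u. (U, [u]) \<in> \<omega>} = \<omega>"
proof -
  define V where "V = {u. (U, [u]) \<in> \<omega>}"
  have V: "V \<subseteq> D" "card V = k" "finite V"
    using U_atoms_of_Phi[OF assms] finite_D finite_subset unfolding V_def by blast+
  have restricted: "restrict_world L \<omega> \<in> possible_worlds ar L D"
    using world by (rule restrict_world_possible_worlds)
  have A_iff: "(A, [a]) \<in> restrict_world L \<omega> \<longleftrightarrow> (A, [a]) \<in> \<omega>"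
    and R_iff: "(R, [a, b]) \<in> restrict_world L \<omega> \<longleftrightarrow> (R, [a, b]) \<in> \<omega>" for a b
    using A_in_L R_in_L by (auto simp: restrict_world_def)
  have B_iff: "(B, [a, b]) \<in> \<omega> \<longleftrightarrow> (if (A, [a]) \<in> \<omega> then b \<in> V else (R, [a, b]) \<in> \<omega>)"
    if "a \<in> D" "b \<in> D" for a b
  proof (cases "(A, [a]) \<in> \<omega>")
    case True
    have "successors D B \<omega> a \<subseteq> V" "card (successors D B \<omega> a) = k"
      using assms(2) True \<open>a \<in> D\<close> by (auto simp: Phi_def successors_def V_def)
    then have "successors D B \<omega> a = V"
      using V by (metis card_subset_eq)
    then show ?thesis
      using True that by (auto simp: successors_def)
  next
    case False
    then show ?thesis
      using assms(2) that by (auto simp: Phi_def)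
  qed
  have B_domain: "(B, [a, b]) \<in> \<omega> \<Longrightarrow> a \<in> D \<and> b \<in> D" for a b
    using world by (fastforce simp: mem_possible_worlds)
  show ?thesis
    unfolding V_def[symmetric]
  proof (rule possible_worlds_eqI)
    show "extend (restrict_world L \<omega>) V \<in> possible_worlds ar (L \<union> {U, B}) D"
      using restricted V(1) by (rule extend_possible_worlds)
    show "restrict_world L (extend (restrict_world L \<omega>) V) = restrict_world L \<omega>"
      using restricted by (rule restrict_world_extend)
    show "(U, [u]) \<in> extend (restrict_world L \<omega>) V \<longleftrightarrow> (U, [u]) \<in> \<omega>" for u
      by (simp add: mem_extend_U[OF restricted] V_def)
    show "(B, [a, b]) \<in> extend (restrict_world L \<omega>) V \<longleftrightarrow> (B, [a, b]) \<in> \<omega>" for a b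
    proof (cases "a \<in> D \<and> b \<in> D")
      case True
      then show ?thesis
        by (simp only: mem_extend_B[OF restricted] A_iff R_iff B_iff simp_thms)
    next
      case False
      then show ?thesis
        using B_domain by (auto simp: mem_extend_B[OF restricted])
    qed
  qed (rule world)
qed

lemma Phi_extensions:
  assumes "\<omega> \<in> possible_worlds ar L D" "k_successors_off_A \<omega>"
  shows "{\<omega>' \<in> possible_worlds ar (L \<union> {U, B}) D. Phi \<omega>' \<and> restrict_world L \<omega>' = \<omega>}
           = extend \<omega> ` {V. V \<subseteq> D \<and> card V = k}"
proof (intro equalityI subsetI)
  fix \<omega>' assume "\<omega>' \<in> {\<omega>' \<in> possible_worlds ar (L \<union> {U, B}) D. Phi \<omega>' \<and> restrict_world L \<omega>' = \<omega>}"
  then have "\<omega>' \<in> possible_worlds ar (L \<union> {U, B}) D" "Phi \<omega>'" "restrict_world L \<omega>' = \<omega>"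
    by auto
  then show "\<omega>' \<in> extend \<omega> ` {V. V \<subseteq> D \<and> card V = k}"
    using extend_restrict_world U_atoms_of_Phi by (intro image_eqI[of _ _ "{u. (U, [u]) \<in> \<omega>'}"]) auto
qed (use assms extend_possible_worlds Phi_extend restrict_world_extend in auto)

lemma card_Phi_extensions:
  assumes "\<omega> \<in> possible_worlds ar L D" "k_successors_off_A \<omega>"
  shows "card {\<omega>' \<in> possible_worlds ar (L \<union> {U, B}) D. Phi \<omega>' \<and> restrict_world L \<omega>' = \<omega>}
           = card D choose k"
proof -
  have "inj_on (extend \<omega>) {V. V \<subseteq> D \<and> card V = k}"
    by (rule inj_on_inverseI[where g = "\<lambda>\<omega>'. {u. (U, [u]) \<in> \<omega>'}"])
      (simp add: mem_extend_U[OF assms(1)])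
  then show ?thesis
    unfolding Phi_extensions[OF assms] by (simp add: card_image n_subsets finite_D)
qed

end

theorem lemma4:
  fixes ar :: "'p \<Rightarrow> nat" and L :: "'p set" and \<Delta> :: "'d set"
    and R A U B :: 'p and k :: nat and \<Gamma> :: "'p fm" and \<Upsilon>s :: "'p fm list"
    and w wb :: "'p \<Rightarrow> real" and x y :: nat
  assumes "finite \<Delta>" and "finite L"
    and "R \<in> L" and "ar R = 2" and "A \<in> L" and "ar A = 1"
    and "k \<le> card \<Delta>"
    and "first_order \<Gamma>" and "over ar L \<Gamma>" and "fv \<Gamma> = {}"
    and "\<forall>\<phi>\<in>set \<Upsilon>s. upsilon_constraint ar L \<phi>"
    and "U \<notin> L" and "B \<notin> L" and "U \<noteq> B" and "ar U = 1" and "ar B = 2"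
    and "w U = 1" and "wb U = 1" and "w B = 1" and "wb B = 1"
    and "x \<noteq> y"
  shows "WFOMC ar L \<Delta>
           (Conj \<Gamma> (Conj (conj_list \<Upsilon>s)
              (All x (Disj (Atom A [x]) (ExEq k y (Atom R [x, y])))))) w wb
       = inverse (real (card \<Delta> choose k)) *
         WFOMC ar (L \<union> {U, B}) \<Delta>
           (Conj \<Gamma> (Conj (conj_list \<Upsilon>s)
              (Conj (All x (ExEq k y (Atom B [x, y])))
              (Conj (Card U k)
              (Conj (All x (All y (Imp (Conj (Atom A [x]) (Atom B [x, y])) (Atom U [y]))))
                    (All x (All y (Imp (Neg (Atom A [x])) (Iff (Atom R [x, y]) (Atom B [x, y]))))))))))
           w wb"
proof -
  interpret exactly_k_encoding ar L \<Delta> R A U B k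
    using assms by unfold_locales auto
  have over: "over ar L \<Gamma>" "over ar L (conj_list \<Upsilon>s)"
    using assms(9,11) over_conj_list by auto
  have "WFOMC ar (L \<union> {U, B}) \<Delta> (Conj \<Gamma> (Conj (conj_list \<Upsilon>s) (Phi_sentence x y))) w wb
      = real (card \<Delta> choose k) *
        WFOMC ar L \<Delta> (Conj \<Gamma> (Conj (conj_list \<Upsilon>s) (k_successors_off_A_sentence x y))) w wb"
  proof (rule WFOMC_unit_weight_extension)
    fix \<omega> assume "\<omega> \<in> possible_worlds ar L \<Delta>"
      and "models \<Delta> \<omega> (Conj \<Gamma> (Conj (conj_list \<Upsilon>s) (k_successors_off_A_sentence x y)))"
    then have "models \<Delta> \<omega>' (Conj \<Gamma> (Conj (conj_list \<Upsilon>s) (Phi_sentence x y))) \<longleftrightarrow> Phi \<omega>'"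
      if "restrict_world L \<omega>' = \<omega>" for \<omega>'
      using that models_restrict_world[OF over(1), of \<Delta> \<omega>'] models_restrict_world[OF over(2), of \<Delta> \<omega>']
      by (simp add: models_Conj models_Phi_sentence[OF assms(21)])
    then have "{\<omega>' \<in> possible_worlds ar (L \<union> {U, B}) \<Delta>.
                 models \<Delta> \<omega>' (Conj \<Gamma> (Conj (conj_list \<Upsilon>s) (Phi_sentence x y))) \<and>
                 restrict_world L \<omega>' = \<omega>}
             = {\<omega>' \<in> possible_worlds ar (L \<union> {U, B}) \<Delta>. Phi \<omega>' \<and> restrict_world L \<omega>' = \<omega>}"
      by blast
    then show "card {\<omega>' \<in> possible_worlds ar (L \<union> {U, B}) \<Delta>.
                 models \<Delta> \<omega>' (Conj \<Gamma> (Conj (conj_list \<Upsilon>s) (Phi_sentence x y))) \<and>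
                 restrict_world L \<omega>' = \<omega>} = card \<Delta> choose k"
      using card_Phi_extensions \<open>\<omega> \<in> possible_worlds ar L \<Delta>\<close> \<open>models \<Delta> \<omega> _\<close>
      by (simp add: models_Conj models_k_successors_off_A_sentence[OF assms(21)])
  qed (use assms over k_successors_off_A_restrict_world in
        \<open>auto simp: models_Conj models_Phi_sentence models_k_successors_off_A_sentence
          models_restrict_world\<close>)
  moreover have "real (card \<Delta> choose k) \<noteq> 0"
    using assms(7) by simp
  ultimately show ?thesis
    unfolding Phi_sentence_def k_successors_off_A_sentence_def by simp
qed

end
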